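(* Let $\Lambda$ be a row-finite $k$-graph with no sources such that for every $w\in\Lambda^0$ and every $1\le i\le k$ the set $\{s(\lambda):\lambda\in w\Lambda^{\mathbb{N}e_i}\}$ is infinite. Then the skew product graph $\Lambda\times_d\mathbb{Z}^k$ is not cofinal.
   Context: A $k$-graph is a countable category $\Lambda$ with a functor $d:\Lambda\to\mathbb{N}^k$ with unique factorisation. $\Lambda^n=d^{-1}(n)$, $\Lambda^0$ = vertices, $uXv=\{\lambda\in X:r(\lambda)=u,s(\lambda)=v\}$; row-finite: $v\Lambda^n$ finite; no sources: $v\Lambda^n\ne\emptyset$ for $n\ne0$. $e_1,\dots,e_k$ are the standard generators of $\mathbb{N}^k$ and $\Lambda^{\mathbb{N}e_i}=\bigcup_{r\ge0}\Lambda^{re_i}$. The skew product $\Lambda\times_d\mathbb{Z}^k$ (with $d$ regarded as a functor into $\mathbb{Z}^k$) is the $k$-graph with vertices $\Lambda^0\times\mathbb{Z}^k$, morphisms $\Lambda\times\mathbb{Z}^k$, $r(\lambda,t)=(r(\lambda),t)$, $s(\lambda,t)=(s(\lambda),t+d(\lambda))$, $(\lambda,t)(\mu,t+d(\lambda))=(\lambda\mu,t)$ and degree $d(\lambda,t)=d(\lambda)$. A $k$-graph $\Gamma$ is cofinal if for all $v,w\in\Gamma^0$ there is $N\in\mathbb{N}^k$ such that $v\Gamma s(\alpha)\neq\emptyset$ for every $\alpha\in w\Gamma^N$. *)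

theory Defs
  imports Main "HOL-Library.Countable_Set" "HOL-Library.Function_Algebras"
begin

text \<open>A k-graph is encoded as a small category whose objects are identified with their
identity morphisms. Elements of N^k are functions nat => nat vanishing outside {..<k};
the standard generator e_i (0 <= i < k) is gen i.\<close>

record 'a kgraph =
  mors :: "'a set"
  rg   :: "'a \<Rightarrow> 'a"
  sc   :: "'a \<Rightarrow> 'a"
  cmp  :: "'a \<Rightarrow> 'a \<Rightarrow> 'a"
  deg  :: "'a \<Rightarrow> (nat \<Rightarrow> nat)"

definition natk :: "nat \<Rightarrow> (nat \<Rightarrow> nat) set" where
  "natk k = {n. \<forall>i\<ge>k. n i = 0}"

definition intk :: "nat \<Rightarrow> (nat \<Rightarrow> int) set" where
  "intk k = {t. \<forall>i\<ge>k. t i = 0}"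

definition gen :: "nat \<Rightarrow> nat \<Rightarrow> nat" where
  "gen i = (\<lambda>j. if j = i then 1 else 0)"

definition is_kgraph :: "nat \<Rightarrow> 'a kgraph \<Rightarrow> bool" where
  "is_kgraph k G \<longleftrightarrow>
     countable (mors G) \<and>
     (\<forall>l\<in>mors G. rg G l \<in> mors G \<and> sc G l \<in> mors G
        \<and> rg G (rg G l) = rg G l \<and> sc G (rg G l) = rg G l
        \<and> rg G (sc G l) = sc G l \<and> sc G (sc G l) = sc G l
        \<and> cmp G (rg G l) l = l \<and> cmp G l (sc G l) = l
        \<and> deg G l \<in> natk k \<and> deg G (rg G l) = 0) \<and>
     (\<forall>l\<in>mors G. \<forall>m\<in>mors G. sc G l = rg G m \<longrightarrow>
        cmp G l m \<in> mors G \<and> rg G (cmp G l m) = rg G l \<and> sc G (cmp G l m) = sc G m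
        \<and> deg G (cmp G l m) = deg G l + deg G m) \<and>
     (\<forall>l\<in>mors G. \<forall>m\<in>mors G. \<forall>n\<in>mors G. sc G l = rg G m \<longrightarrow> sc G m = rg G n \<longrightarrow>
        cmp G (cmp G l m) n = cmp G l (cmp G m n)) \<and>
     (\<forall>l\<in>mors G. \<forall>m n. m + n = deg G l \<longrightarrow>
        (\<exists>!p. fst p \<in> mors G \<and> snd p \<in> mors G \<and> sc G (fst p) = rg G (snd p)
              \<and> deg G (fst p) = m \<and> deg G (snd p) = n \<and> cmp G (fst p) (snd p) = l))"

definition verts :: "'a kgraph \<Rightarrow> 'a set" where
  "verts G = {l\<in>mors G. deg G l = 0}"

definition row_finite :: "'a kgraph \<Rightarrow> bool" where
  "row_finite G \<longleftrightarrow> (\<forall>v\<in>verts G. \<forall>n. finite {l\<in>mors G. rg G l = v \<and> deg G l = n})"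

definition no_sources :: "nat \<Rightarrow> 'a kgraph \<Rightarrow> bool" where
  "no_sources k G \<longleftrightarrow> (\<forall>v\<in>verts G. \<forall>n\<in>natk k. n \<noteq> 0 \<longrightarrow>
      {l\<in>mors G. rg G l = v \<and> deg G l = n} \<noteq> {})"

definition cofinal :: "nat \<Rightarrow> 'a kgraph \<Rightarrow> bool" where
  "cofinal k G \<longleftrightarrow> (\<forall>v\<in>verts G. \<forall>w\<in>verts G. \<exists>N\<in>natk k.
      \<forall>\<alpha>\<in>mors G. rg G \<alpha> = w \<and> deg G \<alpha> = N \<longrightarrow>
        (\<exists>\<mu>\<in>mors G. rg G \<mu> = v \<and> sc G \<mu> = sc G \<alpha>))"

definition skew :: "nat \<Rightarrow> 'a kgraph \<Rightarrow> ('a \<times> (nat \<Rightarrow> int)) kgraph" where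
  "skew k G = \<lparr> mors = mors G \<times> intk k,
     rg = (\<lambda>(l, t). (rg G l, t)),
     sc = (\<lambda>(l, t). (sc G l, (\<lambda>i. t i + int (deg G l i)))),
     cmp = (\<lambda>(l, t) (m, u). (cmp G l m, t)),
     deg = (\<lambda>(l, t). deg G l) \<rparr>"

end

theory Submission
  imports Defs
begin

text \<open>Write \<open>S(v, n)\<close> for the set of sources of paths in \<open>v\<Lambda>\<^sup>n\<close>. Cofinality of the skew product,
applied to the vertices \<open>(w, e\<^sub>i)\<close> and \<open>(w, 0)\<close>, yields some \<open>M\<close> with \<open>S(w, M + e\<^sub>i) \<subseteq> S(w, M)\<close>:
every path from \<open>w\<close> of degree \<open>M + e\<^sub>i\<close> can be traded for one of degree \<open>M\<close> with the same source.
Extending paths on the right propagates this to \<open>S(w, M + j e\<^sub>i) \<subseteq> S(w, M)\<close> for all \<open>j\<close>, and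
\<open>S(w, M)\<close> is finite by row-finiteness. Now take a path \<open>\<beta>\<close> from \<open>w\<close> whose degree is \<open>M\<close> with
its \<open>i\<close>-th coordinate removed, and let \<open>u = s(\<beta>)\<close>. Prefixing \<open>\<beta>\<close> shows that all but finitely
many degrees \<open>r e\<^sub>i\<close> contribute only sources in \<open>S(w, M)\<close>, so \<open>u\<Lambda>\<^bsup>\<nat>e\<^sub>i\<^esup>\<close> has only finitely
many sources, contradicting the hypothesis.\<close>

lemma kgraph_comp:
  assumes "is_kgraph k G" "p \<in> mors G" "q \<in> mors G" "sc G p = rg G q"
  shows "cmp G p q \<in> mors G" "rg G (cmp G p q) = rg G p" "sc G (cmp G p q) = sc G q"
    "deg G (cmp G p q) = deg G p + deg G q"
  using assms unfolding is_kgraph_def by blast+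

lemma kgraph_mor:
  assumes "is_kgraph k G" "l \<in> mors G"
  shows "rg G l \<in> mors G" "sc G l \<in> mors G" "sc G (rg G l) = rg G l" "rg G (sc G l) = sc G l"
    "cmp G (rg G l) l = l" "cmp G l (sc G l) = l" "deg G (rg G l) = 0"
  using assms unfolding is_kgraph_def by blast+

lemma kgraph_factor:
  assumes "is_kgraph k G" "l \<in> mors G" "deg G l = m + n"
  obtains p q where "p \<in> mors G" "q \<in> mors G" "sc G p = rg G q" "deg G p = m" "deg G q = n"
    "rg G p = rg G l" "sc G q = sc G l"
proof -
  from assms(1,2) assms(3)[symmetric]
  have "\<exists>!p. fst p \<in> mors G \<and> snd p \<in> mors G \<and> sc G (fst p) = rg G (snd p)
      \<and> deg G (fst p) = m \<and> deg G (snd p) = n \<and> cmp G (fst p) (snd p) = l"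
    unfolding is_kgraph_def by blast
  then obtain p q where pq: "p \<in> mors G" "q \<in> mors G" "sc G p = rg G q"
      "deg G p = m" "deg G q = n" "cmp G p q = l"
    by auto
  moreover have "rg G p = rg G l" "sc G q = sc G l"
    using kgraph_comp(2,3)[OF assms(1) pq(1-3)] pq(6) by simp_all
  ultimately show thesis using that by blast
qed

lemma kgraph_sc_in_verts:
  assumes "is_kgraph k G" "l \<in> mors G"
  shows "sc G l \<in> verts G"
  using kgraph_mor[OF assms] kgraph_mor(7)[OF assms(1) kgraph_mor(2)[OF assms]]
  by (simp add: verts_def)

text \<open>A vertex factors both as \<open>r(v) v\<close> and as \<open>v s(v)\<close> in degree \<open>0 + 0\<close>; uniqueness identifies them.\<close>
lemma kgraph_vertex_rg_sc:
  assumes "is_kgraph k G" "v \<in> verts G"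
  shows "rg G v = v" "sc G v = v"
proof -
  have v: "v \<in> mors G" "deg G v = 0" using assms(2) by (simp_all add: verts_def)
  define P where "P p \<longleftrightarrow> fst p \<in> mors G \<and> snd p \<in> mors G \<and> sc G (fst p) = rg G (snd p)
      \<and> deg G (fst p) = 0 \<and> deg G (snd p) = 0 \<and> cmp G (fst p) (snd p) = v" for p
  have "0 + 0 = deg G v" using v by simp
  with assms(1) v(1) have "\<exists>!p. P p"
    unfolding is_kgraph_def P_def by blast
  moreover have "P (rg G v, v)" "P (v, sc G v)"
    unfolding P_def using kgraph_mor[OF assms(1) v(1)] v kgraph_sc_in_verts[OF assms(1) v(1)]
    by (simp_all add: verts_def)
  ultimately have "(rg G v, v) = (v, sc G v)" by blast
  then show "rg G v = v" "sc G v = v" by simp_all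
qed

definition path_sources :: "'a kgraph \<Rightarrow> 'a \<Rightarrow> (nat \<Rightarrow> nat) \<Rightarrow> 'a set" where
  "path_sources G v n = {sc G l | l. l \<in> mors G \<and> rg G l = v \<and> deg G l = n}"

definition axis_sources :: "'a kgraph \<Rightarrow> 'a \<Rightarrow> nat \<Rightarrow> 'a set" where
  "axis_sources G v i =
     {sc G l | l. l \<in> mors G \<and> rg G l = v \<and> (\<exists>r::nat. deg G l = (\<lambda>j. r * gen i j))}"

lemma finite_path_sources:
  assumes "row_finite G" "v \<in> verts G"
  shows "finite (path_sources G v n)"
proof -
  have "path_sources G v n = sc G ` {l \<in> mors G. rg G l = v \<and> deg G l = n}"
    by (auto simp: path_sources_def)
  then show ?thesis using assms unfolding row_finite_def by simp
qed

lemma obtain_path: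
  assumes "is_kgraph k G" "no_sources k G" "v \<in> verts G" "n \<in> natk k"
  obtains l where "l \<in> mors G" "rg G l = v" "deg G l = n"
proof (cases "n = 0")
  case True
  then show thesis
    using that[of v] assms(3) kgraph_vertex_rg_sc(1)[OF assms(1,3)] by (simp add: verts_def)
next
  case False
  then show thesis using that assms(2-4) unfolding no_sources_def by blast
qed

lemma path_sources_comp:
  assumes "is_kgraph k G" "p \<in> mors G" "rg G p = v" "l \<in> mors G" "rg G l = sc G p"
  shows "sc G l \<in> path_sources G v (deg G p + deg G l)"
proof -
  have "cmp G p l \<in> mors G" "rg G (cmp G p l) = v" "sc G (cmp G p l) = sc G l"
      "deg G (cmp G p l) = deg G p + deg G l"
    using kgraph_comp[OF assms(1,2,4)] assms(3,5) by simp_all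
  then show ?thesis unfolding path_sources_def by (intro CollectI exI[of _ "cmp G p l"]) simp
qed

lemma path_sources_add_right_mono:
  assumes "is_kgraph k G" "path_sources G v a \<subseteq> path_sources G v b"
  shows "path_sources G v (a + p) \<subseteq> path_sources G v (b + p)"
proof
  fix x assume "x \<in> path_sources G v (a + p)"
  then obtain l where l: "l \<in> mors G" "rg G l = v" "deg G l = a + p" "x = sc G l"
    by (auto simp: path_sources_def)
  obtain l1 l2 where l12: "l1 \<in> mors G" "l2 \<in> mors G" "sc G l1 = rg G l2" "deg G l1 = a"
      "deg G l2 = p" "rg G l1 = v" "sc G l2 = x"
    using kgraph_factor[OF assms(1) l(1,3)] l(2,4) by metis
  have "sc G l1 \<in> path_sources G v b"
    using l12 assms(2) unfolding path_sources_def by blast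
  then obtain l1' where "l1' \<in> mors G" "rg G l1' = v" "deg G l1' = b" "sc G l1' = sc G l1"
    by (auto simp: path_sources_def)
  with path_sources_comp[OF assms(1), of l1' v l2] l12 show "x \<in> path_sources G v (b + p)"
    by simp
qed

lemma path_sources_iterate:
  assumes "is_kgraph k G" "path_sources G v (m + p) \<subseteq> path_sources G v m"
  shows "path_sources G v (\<lambda>x. m x + j * p x) \<subseteq> path_sources G v m"
proof (induction j)
  case 0
  then show ?case by simp
next
  case (Suc j)
  have "path_sources G v (m + p + (\<lambda>x. j * p x)) \<subseteq> path_sources G v (m + (\<lambda>x. j * p x))"
    using path_sources_add_right_mono[OF assms] .
  moreover have "m + p + (\<lambda>x. j * p x) = (\<lambda>x. m x + Suc j * p x)"
    and "m + (\<lambda>x. j * p x) = (\<lambda>x. m x + j * p x)"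
    by (auto simp: fun_eq_iff)
  ultimately show ?case using Suc.IH by auto
qed

text \<open>Applied to the vertices \<open>(v, t)\<close> and \<open>(w, 0)\<close> of the skew product; the degree of the
connecting path \<open>\<mu>\<close> is forced by the \<open>\<int>\<^sup>k\<close>-coordinates of its endpoints.\<close>
lemma cofinal_skewD:
  assumes "cofinal k (skew k G)" "v \<in> verts G" "w \<in> verts G" "t \<in> natk k"
  obtains N where "N \<in> natk k"
    "\<And>\<alpha>. \<alpha> \<in> mors G \<Longrightarrow> rg G \<alpha> = w \<Longrightarrow> deg G \<alpha> = N \<Longrightarrow>
       \<exists>\<mu>\<in>mors G. rg G \<mu> = v \<and> sc G \<mu> = sc G \<alpha> \<and> t + deg G \<mu> = N"
proof -
  have "(v, int \<circ> t) \<in> verts (skew k G)" "(w, 0) \<in> verts (skew k G)"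
    using assms(2-4) by (auto simp: verts_def skew_def intk_def natk_def)
  with assms(1) obtain N where N: "N \<in> natk k" and
    H: "\<forall>\<alpha>\<in>mors (skew k G). rg (skew k G) \<alpha> = (w, 0) \<and> deg (skew k G) \<alpha> = N \<longrightarrow>
        (\<exists>\<mu>\<in>mors (skew k G). rg (skew k G) \<mu> = (v, int \<circ> t)
           \<and> sc (skew k G) \<mu> = sc (skew k G) \<alpha>)"
    unfolding cofinal_def by blast
  have "\<exists>\<mu>\<in>mors G. rg G \<mu> = v \<and> sc G \<mu> = sc G \<alpha> \<and> t + deg G \<mu> = N"
    if "\<alpha> \<in> mors G" "rg G \<alpha> = w" "deg G \<alpha> = N" for \<alpha>
  proof -
    have "(\<alpha>, 0) \<in> mors (skew k G)" using that by (simp add: skew_def intk_def)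
    with H that obtain \<mu> where "\<mu> \<in> mors (skew k G)" "rg (skew k G) \<mu> = (v, int \<circ> t)"
        "sc (skew k G) \<mu> = sc (skew k G) (\<alpha>, 0)"
      by (force simp: skew_def)
    then show ?thesis
      using that by (cases \<mu>) (auto simp: skew_def fun_eq_iff simp flip: of_nat_add)
  qed
  with N that show thesis by blast
qed

lemma cofinal_skew_path_sources_shift:
  assumes "is_kgraph k G" "no_sources k G" "cofinal k (skew k G)" "w \<in> verts G" "i < k"
  obtains m where "m \<in> natk k" "path_sources G w (m + gen i) \<subseteq> path_sources G w m"
proof -
  have gen: "gen i \<in> natk k" using assms(5) by (simp add: natk_def gen_def)
  obtain N where N: "N \<in> natk k" and
    H: "\<And>\<alpha>. \<alpha> \<in> mors G \<Longrightarrow> rg G \<alpha> = w \<Longrightarrow> deg G \<alpha> = N \<Longrightarrow>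
       \<exists>\<mu>\<in>mors G. rg G \<mu> = w \<and> sc G \<mu> = sc G \<alpha> \<and> gen i + deg G \<mu> = N"
    using cofinal_skewD[OF assms(3,4,4) gen] by blast
  obtain \<alpha> where "\<alpha> \<in> mors G" "rg G \<alpha> = w" "deg G \<alpha> = N"
    using obtain_path[OF assms(1,2,4) N] .
  with H obtain \<mu>0 where "gen i + deg G \<mu>0 = N" by blast
  then have "gen i \<le> N" by (metis le_add1 le_funI plus_fun_apply)
  then have N_eq: "N = (N - gen i) + gen i" by (simp add: le_fun_def fun_eq_iff)
  have "path_sources G w N \<subseteq> path_sources G w (N - gen i)"
  proof
    fix x assume "x \<in> path_sources G w N"
    then obtain l where "l \<in> mors G" "rg G l = w" "deg G l = N" "x = sc G l"
      by (auto simp: path_sources_def)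
    with H obtain \<mu> where "\<mu> \<in> mors G" "rg G \<mu> = w" "sc G \<mu> = x" "gen i + deg G \<mu> = N"
      by metis
    moreover from this have "deg G \<mu> = N - gen i" by (metis add_diff_cancel_left')
    ultimately show "x \<in> path_sources G w (N - gen i)"
      unfolding path_sources_def by blast
  qed
  moreover have "N - gen i \<in> natk k" using N by (simp add: natk_def)
  ultimately show thesis using that N_eq by metis
qed

lemma finite_axis_sources_of_shift:
  assumes "is_kgraph k G" "row_finite G" "no_sources k G" "w \<in> verts G" "m \<in> natk k"
    and shift: "path_sources G w (m + gen i) \<subseteq> path_sources G w m"
  obtains u where "u \<in> verts G" "finite (axis_sources G u i)"
proof -
  have "m(i := 0) \<in> natk k" using assms(5) by (simp add: natk_def)
  then obtain \<beta> where \<beta>: "\<beta> \<in> mors G" "rg G \<beta> = w" "deg G \<beta> = m(i := 0)"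
    using obtain_path[OF assms(1,3,4)] by blast
  define u where "u = sc G \<beta>"
  have u: "u \<in> verts G" using kgraph_sc_in_verts[OF assms(1) \<beta>(1)] by (simp add: u_def)
  have "axis_sources G u i
      \<subseteq> path_sources G w m \<union> (\<Union>r<m i. path_sources G u (\<lambda>j. r * gen i j))"
  proof
    fix x assume "x \<in> axis_sources G u i"
    then obtain l r where l: "l \<in> mors G" "rg G l = u" "deg G l = (\<lambda>j. r * gen i j)" "x = sc G l"
      by (auto simp: axis_sources_def)
    show "x \<in> path_sources G w m \<union> (\<Union>r<m i. path_sources G u (\<lambda>j. r * gen i j))"
    proof (cases "r < m i")
      case True
      then show ?thesis using l unfolding path_sources_def by blast
    next
      case False
      have "deg G \<beta> + deg G l = (\<lambda>j. m j + (r - m i) * gen i j)"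
        using False \<beta>(3) l(3) by (auto simp: fun_eq_iff gen_def)
      then have "x \<in> path_sources G w (\<lambda>j. m j + (r - m i) * gen i j)"
        using path_sources_comp[OF assms(1) \<beta>(1,2) l(1)] l(2,4) u_def by simp
      then show ?thesis using path_sources_iterate[OF assms(1) shift] by blast
    qed
  qed
  moreover have "finite (path_sources G w m \<union> (\<Union>r<m i. path_sources G u (\<lambda>j. r * gen i j)))"
    using finite_path_sources[OF assms(2)] assms(4) u by simp
  ultimately show thesis using that u finite_subset by blast
qed

theorem theorem7p8:
  fixes k :: nat and G :: "'a kgraph"
  assumes "k \<ge> 1"
    and "is_kgraph k G"
    and "verts G \<noteq> {}"
    and "row_finite G"
    and "no_sources k G"
    and "\<forall>w\<in>verts G. \<forall>i<k.
           infinite {sc G l | l. l \<in> mors G \<and> rg G l = w \<and> (\<exists>r::nat. deg G l = (\<lambda>j. r * gen i j))}"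
  shows "\<not> cofinal k (skew k G)"
proof
  assume cofinal: "cofinal k (skew k G)"
  obtain w where w: "w \<in> verts G" using assms(3) by blast
  have "0 < k" using assms(1) by simp
  then obtain m where "m \<in> natk k" "path_sources G w (m + gen 0) \<subseteq> path_sources G w m"
    using cofinal_skew_path_sources_shift[OF assms(2,5) cofinal w] by blast
  then obtain u where "u \<in> verts G" "finite (axis_sources G u 0)"
    using finite_axis_sources_of_shift[OF assms(2,4,5) w] by blast
  with assms(6) \<open>0 < k\<close> show False unfolding axis_sources_def by blast
qed

end
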